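(* Let $r\ge 1$ and let $x_0,y_0$ be positive integers. Let $p_r(x_0,y_0;x,y)$ denote the probability that the CA competition process with fitness ratio $r$ started at $(x_0,y_0)$ is at state $(x,y)$ at time $x+y-x_0-y_0$. Then for all integers $k\ge0$, $h\ge0$, \[ p_r(x_0,y_0;x_0+k,y_0+h)\ \ge\ \frac{(x_0)_k\,(y_0)_h}{(rx_0+y_0)_{k+h}}\binom{k+h}{k}. \]
   Context: The CA competition process with fitness ratio $r\ge 1$ started at $(x_0,y_0)$ is the discrete-time Markov chain $\{(X_t,Y_t)\}_{t\ge0}$ on $\{(x,y)\in\mathbb{Z}^2: x\ge1,y\ge1\}$ with $(X_0,Y_0)=(x_0,y_0)$ and transition probabilities: from $(x,y)$ it moves to $(x+1,y)$ with probability $\frac{rx}{rx+y}$ and to $(x,y+1)$ with probability $\frac{y}{rx+y}$. $(x)_k=\prod_{i=0}^{k-1}(x+i)$ denotes the Pochhammer symbol (with $(x)_0=1$). *)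

theory Defs
  imports "HOL-Probability.Probability"
begin

definition ca_step :: "real \<Rightarrow> nat \<times> nat \<Rightarrow> (nat \<times> nat) pmf" where
  "ca_step r s = (case s of (x, y) \<Rightarrow>
     map_pmf (\<lambda>b. if b then (x + 1, y) else (x, y + 1))
       (bernoulli_pmf (r * real x / (r * real x + real y))))"

fun ca_dist :: "real \<Rightarrow> nat \<times> nat \<Rightarrow> nat \<Rightarrow> (nat \<times> nat) pmf" where
  "ca_dist r s 0 = return_pmf s"
| "ca_dist r s (Suc t) = bind_pmf (ca_dist r s t) (ca_step r)"

definition ca_prob :: "real \<Rightarrow> nat \<Rightarrow> nat \<Rightarrow> nat \<Rightarrow> nat \<Rightarrow> real" where
  "ca_prob r x0 y0 x y = pmf (ca_dist r (x0, y0) (x + y - x0 - y0)) (x, y)"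

end

theory Submission
  imports Defs
begin

text \<open>
  For \<open>r = 1\<close> the bound \<open>B(k,h)\<close> is the exact probability of the Polya urn. For \<open>r \<ge> 1\<close> it is
  a sub-solution of the forward equation of the chain,
  \<open>B(k,h) \<le> B(k-1,h) P(x-step into (k,h)) + B(k,h-1) P(y-step into (k,h))\<close>,
  whence the claim by induction on the time \<open>k + h\<close>. Raising \<open>r\<close> increases the probability of the
  \<open>x\<close>-step and decreases that of the \<open>y\<close>-step; since the binomial weights of the two predecessors
  are in ratio \<open>k : h\<close>, the gain outweighs the loss.
\<close>

lemma pmf_bind_pmf_ge_sum:
  assumes "finite A"
  shows "(\<Sum>s\<in>A. pmf M s * pmf (f s) z) \<le> pmf (bind_pmf M f) z"
proof -
  have "ennreal (\<Sum>s\<in>A. pmf M s * pmf (f s) z) = (\<Sum>s\<in>A. ennreal (pmf (f s) z) * emeasure M {s})"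
    by (simp add: emeasure_pmf_single ennreal_mult mult.commute flip: sum_ennreal)
  also have "\<dots> = (\<integral>\<^sup>+s. ennreal (pmf (f s) z) * indicator A s \<partial>measure_pmf M)"
    by (rule nn_integral_indicator_finite[symmetric]) (auto simp: assms)
  also have "\<dots> \<le> (\<integral>\<^sup>+s. ennreal (pmf (f s) z) \<partial>measure_pmf M)"
    by (intro nn_integral_mono) (auto simp: indicator_def)
  also have "\<dots> = ennreal (pmf (bind_pmf M f) z)"
    by (simp add: ennreal_pmf_bind)
  finally show ?thesis by (simp add: ennreal_le_iff)
qed

lemma weighted_ratio_ineq:
  fixes r D a b c1 c2 :: real
  assumes "r \<ge> 1" "D > 0" "a \<ge> 0" "b \<ge> 0" "c1 \<ge> 0" "c1 * (b + 1) = c2 * (a + 1)"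
  shows "(c1 + c2) / (D + a + b + 1) \<le> c1 * r / (D + r * a + b + 1) + c2 / (D + r * a + r + b)"
proof -
  define N where "N = D + a + b + 1"
  define s where "s = r - 1"
  have pos: "s \<ge> 0" "N > 0" "N + s * a > 0" "N + s * (a + 1) > 0"
    using assms by (auto simp: s_def N_def add_pos_nonneg)
  have den: "D + a + b + 1 = N" "D + r * a + b + 1 = N + s * a"
      "D + r * a + r + b = N + s * (a + 1)"
    by (simp_all add: N_def s_def algebra_simps)
  have gain: "c1 * r / (N + s * a) - c1 / N = s / N * (c1 * (N - a) / (N + s * a))"
    using pos by (simp add: s_def field_simps)
  have loss: "c2 / N - c2 / (N + s * (a + 1)) = s / N * (c1 * (b + 1) / (N + s * (a + 1)))"
    unfolding assms(6) using pos by (simp add: field_simps)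
  have "(b + 1) / (N + s * (a + 1)) \<le> (N - a) / (N + s * a)"
    using assms pos by (intro frac_le) (auto simp: N_def algebra_simps)
  then have "c1 * (b + 1) / (N + s * (a + 1)) \<le> c1 * (N - a) / (N + s * a)"
    using mult_left_mono assms(5) by fastforce
  then have "s / N * (c1 * (b + 1) / (N + s * (a + 1))) \<le> s / N * (c1 * (N - a) / (N + s * a))"
    using pos by (intro mult_left_mono) auto
  then show ?thesis
    unfolding den using gain loss add_divide_distrib[of c1 c2 N] by linarith
qed

lemma pmf_ca_step_right:
  assumes "r \<ge> 0" "r * real x + real y > 0"
  shows "pmf (ca_step r (x, y)) (x + 1, y) = r * real x / (r * real x + real y)"
proof -
  have "inj (\<lambda>b. if b then (x + 1, y) else (x, y + 1))"
    by (auto simp: inj_def)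
  from pmf_map_inj'[OF this, of _ True] show ?thesis
    using assms by (simp add: ca_step_def)
qed

lemma pmf_ca_step_up:
  assumes "r \<ge> 0" "r * real x + real y > 0"
  shows "pmf (ca_step r (x, y)) (x, y + 1) = real y / (r * real x + real y)"
proof -
  have "inj (\<lambda>b. if b then (x + 1, y) else (x, y + 1))"
    by (auto simp: inj_def)
  from pmf_map_inj'[OF this, of _ False]
  have "pmf (ca_step r (x, y)) (x, y + 1) = 1 - r * real x / (r * real x + real y)"
    using assms by (simp add: ca_step_def)
  with assms show ?thesis by (simp add: field_simps)
qed

definition ca_lower_bound :: "real \<Rightarrow> nat \<Rightarrow> nat \<Rightarrow> nat \<Rightarrow> nat \<Rightarrow> real" where
  "ca_lower_bound r x0 y0 k h =
     pochhammer (real x0) k * pochhammer (real y0) h / pochhammer (r * real x0 + real y0) (k + h)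
       * real ((k + h) choose k)"

lemma ca_lower_bound_nonneg:
  assumes "r \<ge> 0" "y0 \<ge> 1"
  shows "ca_lower_bound r x0 y0 k h \<ge> 0"
  using assms unfolding ca_lower_bound_def pochhammer_of_nat
  by (intro mult_nonneg_nonneg divide_nonneg_nonneg pochhammer_nonneg) (auto simp: add_nonneg_pos)

lemma ca_lower_bound_up_edge:
  "ca_lower_bound r x0 y0 0 (Suc n) =
     ca_lower_bound r x0 y0 0 n * (real (y0 + n) / (r * real x0 + real (y0 + n)))"
  by (simp add: ca_lower_bound_def pochhammer_Suc add.assoc)

lemma ca_lower_bound_right_edge:
  assumes "r \<ge> 1" "y0 \<ge> 1"
  shows "ca_lower_bound r x0 y0 (Suc n) 0 \<le>
     ca_lower_bound r x0 y0 n 0 * (r * real (x0 + n) / (r * real (x0 + n) + real y0))"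
proof -
  define D where "D = r * real x0 + real y0"
  have D: "D > 0" "r * n \<ge> 0"
    using assms by (auto simp: D_def add_nonneg_pos)
  have ratio: "real (x0 + n) / (D + n) \<le> r * real (x0 + n) / (D + r * n)"
  proof -
    have "D + r * n \<le> r * (D + n)"
      using D assms mult_right_mono[of 1 r D] by (simp add: algebra_simps)
    then have "real (x0 + n) * (D + r * n) \<le> r * real (x0 + n) * (D + n)"
      by (metis mult_left_mono mult.assoc mult.left_commute of_nat_0_le_iff)
    then show ?thesis
      using D by (simp add: divide_simps add_pos_nonneg)
  qed
  have eq: "ca_lower_bound r x0 y0 (Suc n) 0
      = ca_lower_bound r x0 y0 n 0 * (real (x0 + n) / (D + n))"
    by (simp add: ca_lower_bound_def pochhammer_Suc D_def)
  have den: "r * real (x0 + n) + real y0 = D + r * n"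
    by (simp add: D_def algebra_simps)
  show ?thesis
    unfolding eq den using ratio ca_lower_bound_nonneg[of r y0 x0 n 0] assms
    by (intro mult_left_mono) auto
qed

lemma ca_lower_bound_interior:
  assumes "r \<ge> 1" "y0 \<ge> 1"
  shows "ca_lower_bound r x0 y0 (Suc a) (Suc b) \<le>
     ca_lower_bound r x0 y0 a (Suc b) * (r * real (x0 + a) / (r * real (x0 + a) + real (y0 + Suc b)))
   + ca_lower_bound r x0 y0 (Suc a) b * (real (y0 + b) / (r * real (x0 + Suc a) + real (y0 + b)))"
    (is "_ \<le> ?rhs")
proof -
  define D where "D = r * real x0 + real y0"
  define F where "F = pochhammer (real x0) a * pochhammer (real y0) b / pochhammer D (Suc (a + b))"
  define c1 where "c1 = real (Suc (a + b) choose a)"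
  define c2 where "c2 = real (Suc (a + b) choose Suc a)"
  define X where "X = real (x0 + a)"
  define Y where "Y = real (y0 + b)"
  have D: "D > 0"
    using assms by (auto simp: D_def add_nonneg_pos)
  have F: "F \<ge> 0"
    unfolding F_def pochhammer_of_nat using D
    by (intro divide_nonneg_nonneg mult_nonneg_nonneg pochhammer_nonneg) auto
  have c: "c1 * (real b + 1) = c2 * (real a + 1)"
    using Suc_times_binomial_add[of a b] unfolding c1_def c2_def of_nat_eq_iff[symmetric, where 'a=real]
    by (simp add: algebra_simps)
  have B1: "ca_lower_bound r x0 y0 a (Suc b) = F * (Y * c1)"
    by (simp add: ca_lower_bound_def F_def c1_def D_def Y_def pochhammer_Suc field_simps)
  have B2: "ca_lower_bound r x0 y0 (Suc a) b = F * (X * c2)"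
    by (simp add: ca_lower_bound_def F_def c2_def D_def X_def pochhammer_Suc field_simps)
  have den1: "r * X + real (y0 + Suc b) = D + r * a + b + 1"
    and den2: "r * real (x0 + Suc a) + Y = D + r * a + r + b"
    by (simp_all add: D_def X_def Y_def algebra_simps)
  have "ca_lower_bound r x0 y0 (Suc a) (Suc b) = F * (X * Y) * ((c1 + c2) / (D + a + b + 1))"
    by (simp add: ca_lower_bound_def F_def c1_def c2_def D_def X_def Y_def pochhammer_Suc field_simps)
  also have "\<dots> \<le> F * (X * Y) * (c1 * r / (D + r * a + b + 1) + c2 / (D + r * a + r + b))"
    using weighted_ratio_ineq[OF assms(1) D _ _ _ c] F
    by (intro mult_left_mono) (auto simp: c1_def X_def Y_def)
  also have "\<dots> = F * (Y * c1) * (r * X / (D + r * a + b + 1))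
      + F * (X * c2) * (Y / (D + r * a + r + b))"
    by (simp add: algebra_simps)
  also have "\<dots> = ?rhs"
    by (simp only: B1 B2 den1 den2 flip: X_def Y_def)
  finally show ?thesis .
qed

lemma ca_lower_bound_le_pmf_ca_dist:
  assumes "r \<ge> 1" "y0 \<ge> 1"
  shows "ca_lower_bound r x0 y0 k h \<le> pmf (ca_dist r (x0, y0) (k + h)) (x0 + k, y0 + h)"
proof (induction "k + h" arbitrary: k h)
  case 0
  then show ?case by (simp add: ca_lower_bound_def)
next
  case (Suc n)
  let ?p = "pmf (ca_dist r (x0, y0) n)"
  let ?q = "pmf (ca_dist r (x0, y0) (Suc n))"
  have IH: "ca_lower_bound r x0 y0 a b \<le> ?p (x0 + a, y0 + b)" if "a + b = n" for a b
    using Suc.hyps(1)[of a b] that by simp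
  have pos: "r * real (x0 + a) + real (y0 + b) > 0" for a b
    using assms by (auto intro: add_nonneg_pos)
  have right: "pmf (ca_step r (x0 + a, y0 + b)) (x0 + Suc a, y0 + b)
      = r * real (x0 + a) / (r * real (x0 + a) + real (y0 + b))"
    and up: "pmf (ca_step r (x0 + a, y0 + b)) (x0 + a, y0 + Suc b)
      = real (y0 + b) / (r * real (x0 + a) + real (y0 + b))" for a b
    using pmf_ca_step_right[OF _ pos] pmf_ca_step_up[OF _ pos] assms by simp_all
  have bind: "(\<Sum>s\<in>A. ?p s * pmf (ca_step r s) z) \<le> ?q z" if "finite A" for A z
    using pmf_bind_pmf_ge_sum[OF that] by simp
  consider "k = 0" "h = Suc n" | a where "k = Suc a" "h = 0" "a = n"
    | a b where "k = Suc a" "h = Suc b" "Suc (a + b) = n"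
    using Suc.hyps(2) by (cases k; cases h) auto
  then show ?case
  proof cases
    case 1
    have "ca_lower_bound r x0 y0 0 (Suc n)
        = ca_lower_bound r x0 y0 0 n * pmf (ca_step r (x0, y0 + n)) (x0, y0 + Suc n)"
      using ca_lower_bound_up_edge up[of 0 n] by simp
    also have "\<dots> \<le> ?p (x0, y0 + n) * pmf (ca_step r (x0, y0 + n)) (x0, y0 + Suc n)"
      using IH[of 0 n] by (intro mult_right_mono) auto
    also have "\<dots> \<le> ?q (x0, y0 + Suc n)"
      using bind[of "{(x0, y0 + n)}"] by simp
    finally show ?thesis using 1 by simp
  next
    case 2
    have "ca_lower_bound r x0 y0 (Suc n) 0
        \<le> ca_lower_bound r x0 y0 n 0 * pmf (ca_step r (x0 + n, y0)) (x0 + Suc n, y0)"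
      using ca_lower_bound_right_edge[OF assms] right[of n 0] by simp
    also have "\<dots> \<le> ?p (x0 + n, y0) * pmf (ca_step r (x0 + n, y0)) (x0 + Suc n, y0)"
      using IH[of n 0] by (intro mult_right_mono) auto
    also have "\<dots> \<le> ?q (x0 + Suc n, y0)"
      using bind[of "{(x0 + n, y0)}"] by simp
    finally show ?thesis using 2 by simp
  next
    case 3
    let ?s1 = "(x0 + a, y0 + Suc b)" and ?s2 = "(x0 + Suc a, y0 + b)"
      and ?t = "(x0 + Suc a, y0 + Suc b)"
    have "ca_lower_bound r x0 y0 (Suc a) (Suc b)
        \<le> ca_lower_bound r x0 y0 a (Suc b) * pmf (ca_step r ?s1) ?t
         + ca_lower_bound r x0 y0 (Suc a) b * pmf (ca_step r ?s2) ?t"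
      using ca_lower_bound_interior[OF assms] by (simp only: right up)
    also have "\<dots> \<le> ?p ?s1 * pmf (ca_step r ?s1) ?t + ?p ?s2 * pmf (ca_step r ?s2) ?t"
      using IH[of a "Suc b"] IH[of "Suc a" b] 3 by (intro add_mono mult_right_mono) auto
    also have "\<dots> \<le> ?q ?t"
      using bind[of "{?s1, ?s2}"] by simp
    finally show ?thesis using 3 by simp
  qed
qed

theorem lemma1:
  fixes r :: real and x0 y0 k h :: nat
  assumes "r \<ge> 1" and "x0 \<ge> 1" and "y0 \<ge> 1"
  shows "ca_prob r x0 y0 (x0 + k) (y0 + h) \<ge>
    pochhammer (real x0) k * pochhammer (real y0) h / pochhammer (r * real x0 + real y0) (k + h)
      * real ((k + h) choose k)"
  using ca_lower_bound_le_pmf_ca_dist[OF assms(1,3), of x0 k h]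
  by (simp add: ca_prob_def ca_lower_bound_def)

end
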